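(* Let $m>0$. For every fixed $k\geq0$, the functions $$\widetilde S^{\mathrm o}_k(y)=\frac{\sinh\big(k\arcsin\frac{y}{m+1}\big)}{\cos\big(\arcsin\frac{y}{m+1}\big)},\qquad\widetilde S^{\mathrm e}_k(y)=\frac{\cosh\big(k\arcsin\frac{y}{m+1}\big)}{\cos\big(\arcsin\frac{y}{m+1}\big)}$$ have Taylor expansions in the variable $y\in[-1,1]$ (about $y=0$) with nonnegative coefficients. *)

theory Defs
  imports Complex_Main
begin

definition S_odd :: "real \<Rightarrow> real \<Rightarrow> real \<Rightarrow> real" where
  "S_odd m k y = sinh (k * arcsin (y / (m + 1))) / cos (arcsin (y / (m + 1)))"

definition S_even :: "real \<Rightarrow> real \<Rightarrow> real \<Rightarrow> real" where
  "S_even m k y = cosh (k * arcsin (y / (m + 1))) / cos (arcsin (y / (m + 1)))"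

definition nonneg_taylor_on_unit :: "(real \<Rightarrow> real) \<Rightarrow> bool" where
  "nonneg_taylor_on_unit f \<longleftrightarrow>
     (\<exists>c :: nat \<Rightarrow> real. (\<forall>n. c n \<ge> 0) \<and>
        (\<forall>y\<in>{-1..1}. (\<lambda>n. c n * y ^ n) sums f y))"

end

(*
  The function F t = exp (k arcsin t) / sqrt (1 - t^2) = exp (k arcsin t) / cos (arcsin t)
  solves (1 - t^2) F'' - 3 t F' - (1 + k^2) F = 0 with F 0 = 1 and F' 0 = k, so its Taylor
  coefficients obey (n + 1) (n + 2) c (n + 2) = ((n + 1)^2 + k^2) c n, and they are nonnegative
  for k >= 0.  Conversely, these coefficients grow only polynomially, so their power series P
  converges on (-1, 1) and solves the same equation there; two first-order uniqueness arguments
  then give sqrt (1 - t^2) P t = exp (k arcsin t).  Substituting t = y / (m + 1) puts [-1, 1]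
  inside the interval of convergence, and the two functions of the theorem are the odd and even
  parts of F (y / (m + 1)), which inherit nonnegative coefficients.
*)

theory Submission
  imports Defs "HOL-Analysis.Summation_Tests"
begin

lemma linear_ode_solution_eq_exp:
  fixes f g G :: "real \<Rightarrow> real"
  assumes f': "\<And>y. y \<in> {a<..<b} \<Longrightarrow> (f has_real_derivative g y * f y) (at y)"
    and G': "\<And>y. y \<in> {a<..<b} \<Longrightarrow> (G has_real_derivative g y) (at y)"
    and x0: "x0 \<in> {a<..<b}" and x: "x \<in> {a<..<b}"
  shows "f x = f x0 * exp (G x - G x0)"
proof -
  define N where "N y = f y * exp (- G y)" for y
  have "(N has_real_derivative 0) (at y)" if "y \<in> {a<..<b}" for y
    unfolding N_def [abs_def]
    by (rule f' [OF that] G' [OF that] derivative_eq_intros refl)+ simp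
  then have "N x = N x0" using x0 x by (intro DERIV_isconst3[of a b]) auto
  then show ?thesis unfolding N_def by (simp add: exp_diff exp_minus field_simps)
qed

lemma has_real_derivative_sqrt_one_minus_sq:
  fixes y :: real
  assumes "\<bar>y\<bar> < 1"
  shows "((\<lambda>y. sqrt (1 - y^2)) has_real_derivative - y / sqrt (1 - y^2)) (at y)"
proof -
  have "y^2 < 1" using assms by (simp add: abs_square_less_1)
  then have "((\<lambda>y. sqrt (1 - y^2)) has_real_derivative
               inverse (sqrt (1 - y^2)) / 2 * (- (2 * y))) (at y)"
    by (intro DERIV_chain2[where f = sqrt] DERIV_real_sqrt derivative_eq_intros) auto
  then show ?thesis by (simp add: field_simps)
qed

definition power_series :: "(nat \<Rightarrow> real) \<Rightarrow> real \<Rightarrow> real" where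
  "power_series a x = (\<Sum>n. a n * x ^ n)"

lemma power_series_at_zero [simp]: "power_series a 0 = a 0"
  by (simp add: power_series_def)

lemma summable_diffs_in_unit_interval:
  fixes a :: "nat \<Rightarrow> real" and x :: real
  assumes "\<And>x. \<bar>x\<bar> < 1 \<Longrightarrow> summable (\<lambda>n. a n * x ^ n)" and "\<bar>x\<bar> < 1"
  shows "summable (\<lambda>n. diffs a n * x ^ n)"
  by (rule termdiff_converges[where K = 1]) (use assms in auto)

lemma has_real_derivative_power_series:
  fixes a :: "nat \<Rightarrow> real" and x :: real
  assumes "\<And>x. \<bar>x\<bar> < 1 \<Longrightarrow> summable (\<lambda>n. a n * x ^ n)" and "\<bar>x\<bar> < 1"
  shows "(power_series a has_real_derivative power_series (diffs a) x) (at x)"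
  unfolding power_series_def [abs_def] using assms by (intro termdiffs_strong'[where K = 1]) auto

lemma sums_of_nat_mult_power_series:
  fixes a :: "nat \<Rightarrow> real" and x :: real
  assumes "summable (\<lambda>n. diffs a n * x ^ n)"
  shows "(\<lambda>n. real n * a n * x ^ n) sums (x * power_series (diffs a) x)"
proof -
  have "(\<lambda>n. x * (diffs a n * x ^ n)) sums (x * power_series (diffs a) x)"
    using sums_mult[OF summable_sums[OF assms]] unfolding power_series_def .
  moreover have "x * (diffs a n * x ^ n) = real (n + 1) * a (n + 1) * x ^ (n + 1)" for n
    by (simp add: diffs_def algebra_simps)
  ultimately have "(\<lambda>n. real (n + 1) * a (n + 1) * x ^ (n + 1)) sums (x * power_series (diffs a) x)"
    by simp
  then show ?thesis by (subst (asm) sums_iff_shift) simp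
qed

lemma sums_of_nat_mult_pred_power_series:
  fixes a :: "nat \<Rightarrow> real" and x :: real
  assumes "summable (\<lambda>n. diffs (diffs a) n * x ^ n)"
  shows "(\<lambda>n. real n * (real n - 1) * a n * x ^ n) sums (x^2 * power_series (diffs (diffs a)) x)"
proof -
  have "(\<lambda>n. x^2 * (diffs (diffs a) n * x ^ n)) sums (x^2 * power_series (diffs (diffs a)) x)"
    using sums_mult[OF summable_sums[OF assms]] unfolding power_series_def .
  moreover have "x^2 * (diffs (diffs a) n * x ^ n)
      = real (n + 2) * (real (n + 2) - 1) * a (n + 2) * x ^ (n + 2)" for n
    by (simp add: diffs_def power_add algebra_simps power2_eq_square)
  ultimately have "(\<lambda>n. real (n + 2) * (real (n + 2) - 1) * a (n + 2) * x ^ (n + 2))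
      sums (x^2 * power_series (diffs (diffs a)) x)"
    by simp
  then show ?thesis by (subst (asm) sums_iff_shift) (simp add: numeral_2_eq_2)
qed

lemma summable_power_mult_geometric:
  fixes r :: real
  assumes "\<bar>r\<bar> < 1"
  shows "summable (\<lambda>n. (real n + 1) ^ p * r ^ n)"
proof -
  have "(\<lambda>n. real (Suc n) / real (Suc (Suc n))) \<longlonglongrightarrow> 1"
    using LIMSEQ_Suc[OF LIMSEQ_n_over_Suc_n] by simp
  then have "(\<lambda>n. (real (Suc n) / real (Suc (Suc n))) ^ p) \<longlonglongrightarrow> 1 ^ p"
    by (intro tendsto_power)
  then have "(\<lambda>n. norm ((real n + 1) ^ p) / norm ((real (Suc n) + 1) ^ p)) \<longlonglongrightarrow> 1"
    by (simp add: power_divide add_ac)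
  then have "conv_radius (\<lambda>n. (real n + 1) ^ p) = ereal 1"
    by (intro conv_radius_ratio_limit[OF refl]) simp_all
  with assms show ?thesis by (intro summable_in_conv_radius) simp
qed

lemma nonneg_taylor_on_unit_cong:
  assumes "nonneg_taylor_on_unit f" and "\<And>y. y \<in> {-1..1} \<Longrightarrow> f y = g y"
  shows "nonneg_taylor_on_unit g"
  using assms unfolding nonneg_taylor_on_unit_def by auto

lemma nonneg_taylor_on_unit_rescale:
  fixes a :: "nat \<Rightarrow> real" and r :: real
  assumes "\<And>n. a n \<ge> 0" and "\<And>t. \<bar>t\<bar> < 1 \<Longrightarrow> (\<lambda>n. a n * t ^ n) sums f t" and "r > 1"
  shows "nonneg_taylor_on_unit (\<lambda>y. f (y / r))"
  unfolding nonneg_taylor_on_unit_def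
proof (intro exI conjI allI ballI)
  show "a n / r ^ n \<ge> 0" for n using assms by simp
  fix y :: real assume "y \<in> {-1..1}"
  with \<open>r > 1\<close> have "\<bar>y / r\<bar> < 1" by (auto simp: abs_if field_simps)
  from assms(2)[OF this] show "(\<lambda>n. a n / r ^ n * y ^ n) sums f (y / r)"
    by (simp add: power_divide)
qed

lemma nonneg_taylor_on_unit_even_part:
  assumes "nonneg_taylor_on_unit f"
  shows "nonneg_taylor_on_unit (\<lambda>y. (f y + f (- y)) / 2)"
proof -
  obtain c where c: "\<And>n. c n \<ge> 0" "\<And>y. y \<in> {-1..1} \<Longrightarrow> (\<lambda>n. c n * y ^ n) sums f y"
    using assms unfolding nonneg_taylor_on_unit_def by blast
  have "(\<lambda>n. (if even n then c n else 0) * y ^ n) sums ((f y + f (- y)) / 2)"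
    if "y \<in> {-1..1}" for y
  proof -
    have "(\<lambda>n. (c n * y ^ n + c n * (- y) ^ n) / 2) sums ((f y + f (- y)) / 2)"
      using that by (intro sums_divide sums_add c) auto
    moreover have "(c n * y ^ n + c n * (- y) ^ n) / 2 = (if even n then c n else 0) * y ^ n" for n
      by (cases "even n") simp_all
    ultimately show ?thesis by simp
  qed
  with c show ?thesis
    unfolding nonneg_taylor_on_unit_def by (intro exI[of _ "\<lambda>n. if even n then c n else 0"]) auto
qed

lemma nonneg_taylor_on_unit_odd_part:
  assumes "nonneg_taylor_on_unit f"
  shows "nonneg_taylor_on_unit (\<lambda>y. (f y - f (- y)) / 2)"
proof -
  obtain c where c: "\<And>n. c n \<ge> 0" "\<And>y. y \<in> {-1..1} \<Longrightarrow> (\<lambda>n. c n * y ^ n) sums f y"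
    using assms unfolding nonneg_taylor_on_unit_def by blast
  have "(\<lambda>n. (if odd n then c n else 0) * y ^ n) sums ((f y - f (- y)) / 2)"
    if "y \<in> {-1..1}" for y
  proof -
    have "(\<lambda>n. (c n * y ^ n - c n * (- y) ^ n) / 2) sums ((f y - f (- y)) / 2)"
      using that by (intro sums_divide sums_diff c) auto
    moreover have "(c n * y ^ n - c n * (- y) ^ n) / 2 = (if odd n then c n else 0) * y ^ n" for n
      by (cases "even n") simp_all
    ultimately show ?thesis by simp
  qed
  with c show ?thesis
    unfolding nonneg_taylor_on_unit_def by (intro exI[of _ "\<lambda>n. if odd n then c n else 0"]) auto
qed

fun exp_arcsin_coeff :: "real \<Rightarrow> nat \<Rightarrow> real" where
  "exp_arcsin_coeff k 0 = 1"
| "exp_arcsin_coeff k (Suc 0) = k"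
| "exp_arcsin_coeff k (Suc (Suc n)) =
     ((real n + 1)^2 + k^2) / ((real n + 2) * (real n + 1)) * exp_arcsin_coeff k n"

lemma exp_arcsin_coeff_nonneg: "k \<ge> 0 \<Longrightarrow> exp_arcsin_coeff k n \<ge> 0"
  by (induction k n rule: exp_arcsin_coeff.induct) auto

lemma diffs_diffs_exp_arcsin_coeff:
  "diffs (diffs (exp_arcsin_coeff k)) n = ((real n + 1)^2 + k^2) * exp_arcsin_coeff k n"
proof -
  have "diffs (diffs (exp_arcsin_coeff k)) n
        = ((real n + 2) * (real n + 1)) * exp_arcsin_coeff k (Suc (Suc n))"
    by (simp add: diffs_def algebra_simps del: exp_arcsin_coeff.simps)
  then show ?thesis by simp
qed

lemma recurrence_factor_mult_power_le:
  fixes N k :: real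
  assumes N: "N \<ge> 1" and kp: "k^2 \<le> real p"
  shows "(N^2 + k^2) / ((N + 1) * N) * N ^ p \<le> (N + 2) ^ p"
proof -
  have "(N^2 + k^2) / ((N + 1) * N) \<le> (N^2 + k^2) / N^2"
    using N by (intro divide_left_mono) (auto simp: power2_eq_square)
  also have "\<dots> = 1 + k^2 / N^2" using N by (simp add: field_simps)
  also have "\<dots> \<le> 1 + real p / N^2" using kp N by (simp add: divide_right_mono)
  also have "\<dots> \<le> 1 + real p / N"
    using N by (simp add: divide_left_mono power2_eq_square)
  also have "\<dots> \<le> 1 + real p * (2 / N)" using N by (simp add: field_simps)
  also have "\<dots> \<le> (1 + 2 / N) ^ p" using N by (intro Bernoulli_inequality) (simp add: field_simps)
  finally have "(N^2 + k^2) / ((N + 1) * N) * N ^ p \<le> (1 + 2 / N) ^ p * N ^ p"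
    using N by (intro mult_right_mono) auto
  also have "\<dots> = (N + 2) ^ p" using N by (simp add: power_mult_distrib[symmetric] field_simps)
  finally show ?thesis .
qed

lemma exp_arcsin_coeff_le_poly:
  "k \<ge> 0 \<Longrightarrow> k^2 \<le> real p \<Longrightarrow> exp_arcsin_coeff k n \<le> max 1 k * (real n + 1) ^ p"
proof (induction k n rule: exp_arcsin_coeff.induct)
  case (1 k)
  then show ?case by simp
next
  case (2 k)
  have "k \<le> max 1 k * 1" by simp
  also have "\<dots> \<le> max 1 k * 2 ^ p" by (intro mult_left_mono) auto
  finally show ?case by simp
next
  case (3 k n)
  let ?N = "real n + 1"
  have "exp_arcsin_coeff k (Suc (Suc n)) = (?N^2 + k^2) / ((?N + 1) * ?N) * exp_arcsin_coeff k n"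
    by (simp add: add_ac)
  also have "\<dots> \<le> (?N^2 + k^2) / ((?N + 1) * ?N) * (max 1 k * ?N ^ p)"
    using 3 by (intro mult_left_mono) simp_all
  also have "\<dots> = max 1 k * ((?N^2 + k^2) / ((?N + 1) * ?N) * ?N ^ p)"
    by (simp add: algebra_simps)
  also have "\<dots> \<le> max 1 k * (?N + 2) ^ p"
    using 3 by (intro mult_left_mono recurrence_factor_mult_power_le) auto
  finally show ?case by (simp add: algebra_simps)
qed

lemma summable_exp_arcsin_coeff:
  fixes x :: real
  assumes k: "k \<ge> 0" and x: "\<bar>x\<bar> < 1"
  shows "summable (\<lambda>n. exp_arcsin_coeff k n * x ^ n)"
proof (rule summable_comparison_test)
  define p where "p = nat \<lceil>k^2\<rceil>"
  have kp: "k^2 \<le> real p" unfolding p_def by linarith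
  show "summable (\<lambda>n. max 1 k * ((real n + 1) ^ p * \<bar>x\<bar> ^ n))"
    using summable_power_mult_geometric[of "\<bar>x\<bar>" p] x by (intro summable_mult) simp
  have "norm (exp_arcsin_coeff k n * x ^ n) \<le> max 1 k * ((real n + 1) ^ p * \<bar>x\<bar> ^ n)" for n
    using mult_right_mono[OF exp_arcsin_coeff_le_poly[OF k kp], of "\<bar>x\<bar> ^ n" n]
    by (simp add: abs_mult power_abs exp_arcsin_coeff_nonneg[OF k] mult_ac)
  then show "\<exists>N. \<forall>n\<ge>N.
      norm (exp_arcsin_coeff k n * x ^ n) \<le> max 1 k * ((real n + 1) ^ p * \<bar>x\<bar> ^ n)"
    by blast
qed

lemma exp_arcsin_series_ode:
  fixes k x :: real
  assumes k: "k \<ge> 0" and x: "\<bar>x\<bar> < 1"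
  defines "c \<equiv> exp_arcsin_coeff k"
  shows "(1 - x^2) * power_series (diffs (diffs c)) x
         = 3 * x * power_series (diffs c) x + (1 + k^2) * power_series c x"
proof -
  have conv: "summable (\<lambda>n. c n * y ^ n)" if "\<bar>y\<bar> < 1" for y
    unfolding c_def using summable_exp_arcsin_coeff[OF k that] .
  have conv': "summable (\<lambda>n. diffs c n * y ^ n)" if "\<bar>y\<bar> < 1" for y
    using summable_diffs_in_unit_interval[OF conv that] .
  have conv'': "summable (\<lambda>n. diffs (diffs c) n * x ^ n)"
    using summable_diffs_in_unit_interval[OF conv' x] .
  have "(\<lambda>n. c n * x ^ n) sums power_series c x"
    unfolding power_series_def using conv[OF x] by (rule summable_sums)
  moreover have "(\<lambda>n. diffs (diffs c) n * x ^ n) sums power_series (diffs (diffs c)) x"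
    unfolding power_series_def using conv'' by (rule summable_sums)
  ultimately have "(\<lambda>n. diffs (diffs c) n * x ^ n - real n * (real n - 1) * c n * x ^ n
            - 3 * (real n * c n * x ^ n) - (1 + k^2) * (c n * x ^ n))
        sums (power_series (diffs (diffs c)) x - x^2 * power_series (diffs (diffs c)) x
              - 3 * (x * power_series (diffs c) x) - (1 + k^2) * power_series c x)"
    by (intro sums_diff sums_mult sums_of_nat_mult_power_series[OF conv'[OF x]]
          sums_of_nat_mult_pred_power_series[OF conv''])
  moreover have "diffs (diffs c) n * x ^ n - real n * (real n - 1) * c n * x ^ n
            - 3 * (real n * c n * x ^ n) - (1 + k^2) * (c n * x ^ n) = 0" for n
    unfolding c_def diffs_diffs_exp_arcsin_coeff by (simp add: algebra_simps power2_eq_square)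
  ultimately have "(\<lambda>n. 0) sums (power_series (diffs (diffs c)) x - x^2 * power_series (diffs (diffs c)) x
      - 3 * (x * power_series (diffs c) x) - (1 + k^2) * power_series c x)"
    by simp
  from sums_unique2[OF this sums_zero] show ?thesis by (simp add: algebra_simps)
qed

lemma exp_arcsin_series_first_order:
  fixes k x :: real
  assumes k: "k \<ge> 0" and x: "\<bar>x\<bar> < 1"
  defines "c \<equiv> exp_arcsin_coeff k"
  shows "(1 - x^2) * power_series (diffs c) x - x * power_series c x
         = k * sqrt (1 - x^2) * power_series c x"
proof -
  define s where "s y = sqrt (1 - y^2)" for y :: real
  \<comment> \<open>The ODE turns the defect \<open>M\<close> of the first-order equation into a solution of
    \<open>M' = - k M / sqrt (1 - y\<^sup>2)\<close>; since \<open>M 0 = 0\<close>, it vanishes identically.\<close>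
  define M where "M y = (1 - y^2) * power_series (diffs c) y - y * power_series c y
                        - k * s y * power_series c y" for y
  have conv: "summable (\<lambda>n. c n * y ^ n)" if "\<bar>y\<bar> < 1" for y
    unfolding c_def using summable_exp_arcsin_coeff[OF k that] .
  have conv': "summable (\<lambda>n. diffs c n * y ^ n)" if "\<bar>y\<bar> < 1" for y
    using summable_diffs_in_unit_interval[OF conv that] .
  have s': "(s has_real_derivative - y / s y) (at y)" if "\<bar>y\<bar> < 1" for y
    unfolding s_def [abs_def] using has_real_derivative_sqrt_one_minus_sq[OF that] .
  have M': "(M has_real_derivative - (k * inverse (s y)) * M y) (at y)" if "y \<in> {-1<..<1}" for y
  proof -
    from that have y: "\<bar>y\<bar> < 1" by auto
    then have "y^2 < 1" by (simp add: abs_square_less_1)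
    then have "s y > 0" "s y * s y = 1 - y^2" unfolding s_def by simp_all
    let ?D = "- (2 * y) * power_series (diffs c) y + (1 - y^2) * power_series (diffs (diffs c)) y
              - (power_series c y + y * power_series (diffs c) y)
              - k * (- y / s y * power_series c y + s y * power_series (diffs c) y)"
    have "(M has_real_derivative ?D) (at y)"
      unfolding M_def [abs_def]
      by (rule derivative_eq_intros refl has_real_derivative_power_series[OF conv y]
            has_real_derivative_power_series[OF conv' y] s' [OF y] | simp add: algebra_simps)+
    moreover have "?D = - (k * inverse (s y)) * M y"
    proof -
      have ode: "(1 - y^2) * power_series (diffs (diffs c)) y
                 = 3 * y * power_series (diffs c) y + (1 + k^2) * power_series c y"
        unfolding c_def by (rule exp_arcsin_series_ode[OF k y])
      have ss: "s y * (s y * z) = (1 - y * y) * z" for z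
        using \<open>s y * s y = 1 - y^2\<close> by (simp add: power2_eq_square mult.assoc [symmetric])
      show ?thesis unfolding M_def ode using \<open>s y > 0\<close>
        by (simp add: field_simps power2_eq_square) (simp add: algebra_simps ss)
    qed
    ultimately show ?thesis by simp
  qed
  have arcsin': "((\<lambda>y. - k * arcsin y) has_real_derivative - (k * inverse (s y))) (at y)"
    if "y \<in> {-1<..<1}" for y
    unfolding s_def using that by (auto intro!: derivative_eq_intros DERIV_arcsin)
  have "M x = M 0 * exp (- k * arcsin x - - k * arcsin 0)"
    by (rule linear_ode_solution_eq_exp[OF M' arcsin']) (use x in auto)
  also have "M 0 = 0" unfolding M_def s_def c_def by (simp add: diffs_def)
  finally show ?thesis unfolding M_def s_def by simp
qed

lemma sqrt_one_minus_sq_mult_exp_arcsin_series: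
  fixes k x :: real
  assumes k: "k \<ge> 0" and x: "\<bar>x\<bar> < 1"
  shows "sqrt (1 - x^2) * power_series (exp_arcsin_coeff k) x = exp (k * arcsin x)"
proof -
  define c where "c = exp_arcsin_coeff k"
  define s where "s y = sqrt (1 - y^2)" for y :: real
  define h where "h y = s y * power_series c y" for y
  have conv: "summable (\<lambda>n. c n * y ^ n)" if "\<bar>y\<bar> < 1" for y
    unfolding c_def using summable_exp_arcsin_coeff[OF k that] .
  have h': "(h has_real_derivative k * inverse (s y) * h y) (at y)" if "y \<in> {-1<..<1}" for y
  proof -
    from that have y: "\<bar>y\<bar> < 1" by auto
    then have "y^2 < 1" by (simp add: abs_square_less_1)
    then have "s y > 0" "s y * s y = 1 - y^2" unfolding s_def by simp_all
    have "(h has_real_derivative - y / s y * power_series c y + s y * power_series (diffs c) y) (at y)"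
      unfolding h_def [abs_def] s_def
      by (rule derivative_eq_intros refl has_real_derivative_power_series[OF conv y]
            has_real_derivative_sqrt_one_minus_sq[OF y] | simp)+
    moreover have "- y / s y * power_series c y + s y * power_series (diffs c) y
                   = ((1 - y^2) * power_series (diffs c) y - y * power_series c y) / s y"
      using \<open>s y > 0\<close> unfolding \<open>s y * s y = 1 - y^2\<close> [symmetric]
      by (simp add: field_simps)
    moreover have "\<dots> = k * inverse (s y) * h y"
      using exp_arcsin_series_first_order[OF k y] \<open>s y > 0\<close>
      unfolding h_def s_def c_def by (simp add: field_simps)
    ultimately show ?thesis by simp
  qed
  have arcsin': "((\<lambda>y. k * arcsin y) has_real_derivative k * inverse (s y)) (at y)"
    if "y \<in> {-1<..<1}" for y
    unfolding s_def using that by (auto intro!: derivative_eq_intros DERIV_arcsin)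
  have "h x = h 0 * exp (k * arcsin x - k * arcsin 0)"
    by (rule linear_ode_solution_eq_exp[OF h' arcsin']) (use x in auto)
  then show ?thesis unfolding h_def s_def c_def by simp
qed

lemma sums_exp_arcsin_div_cos:
  fixes k t :: real
  assumes k: "k \<ge> 0" and t: "\<bar>t\<bar> < 1"
  shows "(\<lambda>n. exp_arcsin_coeff k n * t ^ n) sums (exp (k * arcsin t) / cos (arcsin t))"
proof -
  have "t^2 < 1" using t by (simp add: abs_square_less_1)
  moreover have "cos (arcsin t) = sqrt (1 - t^2)" using t by (intro cos_arcsin) auto
  ultimately have "power_series (exp_arcsin_coeff k) t = exp (k * arcsin t) / cos (arcsin t)"
    using sqrt_one_minus_sq_mult_exp_arcsin_series[OF k t] by (simp add: field_simps)
  then show ?thesis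
    using summable_sums[OF summable_exp_arcsin_coeff[OF k t]] unfolding power_series_def by simp
qed

lemma exp_arcsin_div_cos_minus:
  fixes k t :: real
  assumes "\<bar>t\<bar> \<le> 1"
  shows "exp (k * arcsin (- t)) / cos (arcsin (- t)) = exp (- (k * arcsin t)) / cos (arcsin t)"
  using assms by (simp add: arcsin_minus cos_arcsin abs_le_iff)

theorem mainTheorem7:
  fixes m k :: real
  assumes "m > 0" and "k \<ge> 0"
  shows "nonneg_taylor_on_unit (S_odd m k) \<and> nonneg_taylor_on_unit (S_even m k)"
proof -
  define F where "F y = exp (k * arcsin (y / (m + 1))) / cos (arcsin (y / (m + 1)))" for y
  have F: "nonneg_taylor_on_unit F"
    using nonneg_taylor_on_unit_rescale[of "exp_arcsin_coeff k"
        "\<lambda>t. exp (k * arcsin t) / cos (arcsin t)" "m + 1"] assms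
    by (simp add: F_def [abs_def] exp_arcsin_coeff_nonneg sums_exp_arcsin_div_cos)
  have "S_odd m k y = (F y - F (- y)) / 2 \<and> S_even m k y = (F y + F (- y)) / 2"
    if "y \<in> {-1..1}" for y
  proof -
    have "\<bar>y / (m + 1)\<bar> \<le> 1" using that assms(1) by (auto simp: abs_if field_simps)
    from exp_arcsin_div_cos_minus[OF this, of k] show ?thesis
      unfolding S_odd_def S_even_def F_def sinh_field_def cosh_field_def
      by (simp add: diff_divide_distrib add_divide_distrib)
  qed
  with nonneg_taylor_on_unit_odd_part[OF F] nonneg_taylor_on_unit_even_part[OF F] show ?thesis
    by (auto intro: nonneg_taylor_on_unit_cong)
qed

end
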